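(* Let $f\in C^1(\mathbb R)$ and let $X$ and $X^n$ ($n\ge1$) be cadlag processes which admit quadratic variations in the weak sense (along a common refining sequence, with $X^n-X$ and $f(X^n)-f(X)$ also admitting quadratic variations along it), respectively all in the strong sense. Assume $(X^n-X)^*_t\to0$ in probability and $[X^n-X]_t\to0$ in probability as $n\to\infty$. Then $[f(X^n)-f(X)]_t\to0$ in probability, the quadratic variation being in the weak (respectively strong) sense.
   Context: Fixed horizon $t>0$; filtered probability space with usual hypotheses. For a cadlag process $Y$, $Y^*_t=\sup_{s\le t}|Y_s|$. Weak sense: a refining sequence $\{D_k\}_k$ is a sequence of deterministic partitions of $[0,t]$ with mesh $\to0$; $X$ has weak-sense quadratic variation $[X]$ along it if $[X]_s=[X]^c_s+\sum_{u\le s}(\Delta X_u)^2$ with $[X]^c$ increasing continuous and $\sum_{t_i\in D_k,t_i\le s}(X_{t_{i+1}}-X_{t_i})^2\to[X]_s$ in probability for each $0<s\le t$. Strong sense: for a finite partition $P=\{\tau_0\le\dots\le\tau_n\}$ of $[0,t]$ by stopping times, with mesh $\|P\|=\max_i(\tau_i-\tau_{i-1})$, set $[X,Y]^P_s=\sum_{i=1}^n(X_{\tau_i\wedge s}-X_{\tau_{i-1}\wedge s})(Y_{\tau_i\wedge s}-Y_{\tau_{i-1}\wedge s})$; $X,Y$ admit a covariation in the strong sense if there is a finite variation process $[X,Y]$ with $\limsup_{\delta\to0}\sup_{\|P\|\le\delta}\mathbb P(([X,Y]^P-[X,Y])^*_t>\epsilon)=0$ for all $\epsilon>0$ (sup over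 stopping-time partitions of $[0,t]$); $X$ has a strong-sense quadratic variation if $X,X$ admit a strong-sense covariation, and $[X]=[X,X]$. *)

theory Defs
  imports "HOL-Analysis.Analysis" "HOL-Probability.Probability"
begin

text \<open>Processes are maps real \<Rightarrow> 'a \<Rightarrow> real (time, then outcome); only times in [0,t] matter.\<close>

definition usual_hypotheses :: "'a measure \<Rightarrow> (real \<Rightarrow> 'a measure) \<Rightarrow> bool" where
  "usual_hypotheses M F \<longleftrightarrow>
     filtration (space M) F \<and> (\<forall>s. sets (F s) \<subseteq> sets M) \<and>
     (\<forall>A \<in> null_sets M. \<forall>B. B \<subseteq> A \<longrightarrow> B \<in> sets (F 0)) \<and>
     (\<forall>s. sets (F s) = (\<Inter>r\<in>{s<..}. sets (F r)))"

definition cadlag_path :: "real \<Rightarrow> (real \<Rightarrow> real) \<Rightarrow> bool" where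
  "cadlag_path t g \<longleftrightarrow>
     (\<forall>s\<in>{0..<t}. (g \<longlongrightarrow> g s) (at_right s)) \<and>
     (\<forall>s\<in>{0<..t}. \<exists>l. (g \<longlongrightarrow> l) (at_left s))"

definition cadlag_process :: "'a measure \<Rightarrow> real \<Rightarrow> (real \<Rightarrow> 'a \<Rightarrow> real) \<Rightarrow> bool" where
  "cadlag_process M t Y \<longleftrightarrow> (\<forall>\<omega>\<in>space M. cadlag_path t (\<lambda>s. Y s \<omega>))"

definition adapted :: "(real \<Rightarrow> 'a measure) \<Rightarrow> real \<Rightarrow> (real \<Rightarrow> 'a \<Rightarrow> real) \<Rightarrow> bool" where
  "adapted F t Y \<longleftrightarrow> (\<forall>s\<in>{0..t}. Y s \<in> borel_measurable (F s))"

definition sup_abs :: "real \<Rightarrow> (real \<Rightarrow> 'a \<Rightarrow> real) \<Rightarrow> 'a \<Rightarrow> real" where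
  "sup_abs t Y \<omega> = (SUP s\<in>{0..t}. \<bar>Y s \<omega>\<bar>)"

definition conv_prob_zero :: "'a measure \<Rightarrow> (nat \<Rightarrow> 'a \<Rightarrow> real) \<Rightarrow> bool" where
  "conv_prob_zero M Z \<longleftrightarrow>
     (\<forall>\<epsilon>>0. (\<lambda>n. measure M {\<omega>\<in>space M. \<bar>Z n \<omega>\<bar> > \<epsilon>}) \<longlonglongrightarrow> 0)"

definition is_partition :: "real \<Rightarrow> real set \<Rightarrow> bool" where
  "is_partition t D \<longleftrightarrow> finite D \<and> D \<subseteq> {0..t} \<and> 0 \<in> D \<and> t \<in> D"

definition mesh :: "real set \<Rightarrow> real" where
  "mesh D = Sup {b - a | a b. a \<in> D \<and> b \<in> D \<and> a < b \<and> {a<..<b} \<inter> D = {}}"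

definition refining_sequence :: "real \<Rightarrow> (nat \<Rightarrow> real set) \<Rightarrow> bool" where
  "refining_sequence t D \<longleftrightarrow> (\<forall>k. is_partition t (D k)) \<and> (\<lambda>k. mesh (D k)) \<longlonglongrightarrow> 0"

definition succ_pt :: "real set \<Rightarrow> real \<Rightarrow> real" where
  "succ_pt D x = Min {y\<in>D. x < y}"

definition discrete_qv :: "real \<Rightarrow> real set \<Rightarrow> (real \<Rightarrow> 'a \<Rightarrow> real) \<Rightarrow> real \<Rightarrow> 'a \<Rightarrow> real" where
  "discrete_qv t D Y s \<omega> = (\<Sum>x\<in>{x\<in>D. x \<le> s \<and> x < t}. (Y (succ_pt D x) \<omega> - Y x \<omega>)\<^sup>2)"

definition jump :: "(real \<Rightarrow> 'a \<Rightarrow> real) \<Rightarrow> real \<Rightarrow> 'a \<Rightarrow> real" where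
  "jump Y u \<omega> = (if u \<le> 0 then 0 else Y u \<omega> - Lim (at_left u) (\<lambda>r. Y r \<omega>))"

definition weak_qv :: "'a measure \<Rightarrow> real \<Rightarrow> (nat \<Rightarrow> real set) \<Rightarrow> (real \<Rightarrow> 'a \<Rightarrow> real)
    \<Rightarrow> (real \<Rightarrow> 'a \<Rightarrow> real) \<Rightarrow> bool" where
  "weak_qv M t D Y Q \<longleftrightarrow>
     (\<forall>s\<in>{0..t}. Q s \<in> borel_measurable M) \<and>
     (\<exists>C. AE \<omega> in M. mono_on {0..t} (\<lambda>s. C s \<omega>) \<and> continuous_on {0..t} (\<lambda>s. C s \<omega>) \<and>
        (\<forall>s\<in>{0..t}. (\<lambda>u. (jump Y u \<omega>)\<^sup>2) summable_on {0..s} \<and>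
                     Q s \<omega> = C s \<omega> + (\<Sum>\<^sub>\<infinity>u\<in>{0..s}. (jump Y u \<omega>)\<^sup>2))) \<and>
     (\<forall>s\<in>{0<..t}. conv_prob_zero M (\<lambda>k \<omega>. discrete_qv t (D k) Y s \<omega> - Q s \<omega>))"

definition bounded_variation_on :: "real \<Rightarrow> real \<Rightarrow> (real \<Rightarrow> real) \<Rightarrow> bool" where
  "bounded_variation_on a b g \<longleftrightarrow>
     bdd_above {\<Sum>i<n. \<bar>g (p (Suc i)) - g (p i)\<bar> | n p.
                  p 0 = a \<and> p n = b \<and> (\<forall>i<n. p i \<le> p (Suc i))}"

definition fv_process :: "'a measure \<Rightarrow> (real \<Rightarrow> 'a measure) \<Rightarrow> real \<Rightarrow> (real \<Rightarrow> 'a \<Rightarrow> real) \<Rightarrow> bool" where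
  "fv_process M F t Q \<longleftrightarrow> adapted F t Q \<and> cadlag_process M t Q \<and>
     (\<forall>\<omega>\<in>space M. bounded_variation_on 0 t (\<lambda>s. Q s \<omega>))"

definition stopping_partition :: "'a measure \<Rightarrow> (real \<Rightarrow> 'a measure) \<Rightarrow> real \<Rightarrow> nat
    \<Rightarrow> (nat \<Rightarrow> 'a \<Rightarrow> real) \<Rightarrow> bool" where
  "stopping_partition M F t n \<tau> \<longleftrightarrow>
     (\<forall>i\<le>n. stopping_time F (\<tau> i)) \<and>
     (\<forall>\<omega>\<in>space M. \<tau> 0 \<omega> = 0 \<and> \<tau> n \<omega> = t \<and> (\<forall>i<n. \<tau> i \<omega> \<le> \<tau> (Suc i) \<omega>))"

definition mesh_le :: "'a measure \<Rightarrow> nat \<Rightarrow> (nat \<Rightarrow> 'a \<Rightarrow> real) \<Rightarrow> real \<Rightarrow> bool" where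
  "mesh_le M n \<tau> \<delta> \<longleftrightarrow> (\<forall>\<omega>\<in>space M. \<forall>i<n. \<tau> (Suc i) \<omega> - \<tau> i \<omega> \<le> \<delta>)"

definition cov_P :: "(real \<Rightarrow> 'a \<Rightarrow> real) \<Rightarrow> (real \<Rightarrow> 'a \<Rightarrow> real) \<Rightarrow> nat \<Rightarrow> (nat \<Rightarrow> 'a \<Rightarrow> real)
    \<Rightarrow> real \<Rightarrow> 'a \<Rightarrow> real" where
  "cov_P Y Z n \<tau> s \<omega> = (\<Sum>i\<in>{1..n}.
      (Y (min (\<tau> i \<omega>) s) \<omega> - Y (min (\<tau> (i - 1) \<omega>) s) \<omega>) *
      (Z (min (\<tau> i \<omega>) s) \<omega> - Z (min (\<tau> (i - 1) \<omega>) s) \<omega>))"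

text \<open>Q is a strong-sense covariation of Y and Z. The condition
  limsup_{delta->0} sup_{mesh P <= delta} P((...)^*_t > eps) = 0 is written out with epsilon/delta.\<close>
definition strong_cov :: "'a measure \<Rightarrow> (real \<Rightarrow> 'a measure) \<Rightarrow> real \<Rightarrow> (real \<Rightarrow> 'a \<Rightarrow> real)
    \<Rightarrow> (real \<Rightarrow> 'a \<Rightarrow> real) \<Rightarrow> (real \<Rightarrow> 'a \<Rightarrow> real) \<Rightarrow> bool" where
  "strong_cov M F t Y Z Q \<longleftrightarrow> fv_process M F t Q \<and>
     (\<forall>\<epsilon>>0. \<forall>\<eta>>0. \<exists>\<delta>>0. \<forall>n \<tau>. stopping_partition M F t n \<tau> \<and> mesh_le M n \<tau> \<delta> \<longrightarrow>
        measure M {\<omega>\<in>space M. sup_abs t (\<lambda>s \<omega>. cov_P Y Z n \<tau> s \<omega> - Q s \<omega>) \<omega> > \<epsilon>} \<le> \<eta>)"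

definition strong_qv :: "'a measure \<Rightarrow> (real \<Rightarrow> 'a measure) \<Rightarrow> real \<Rightarrow> (real \<Rightarrow> 'a \<Rightarrow> real)
    \<Rightarrow> (real \<Rightarrow> 'a \<Rightarrow> real) \<Rightarrow> bool" where
  "strong_qv M F t Y Q \<longleftrightarrow> strong_cov M F t Y Y Q"

end

theory Submission
  imports Defs
begin

text \<open>For \<open>|x|, |x'| \<le> K\<close> and \<open>|y|, |y'| \<le> \<rho>\<close>, a \<open>C\<^sup>1\<close> function satisfies
  \<open>(f(x'+y') - f x' - (f(x+y) - f x))\<^sup>2 \<le> A (y'-y)\<^sup>2 + B (x'-x)\<^sup>2\<close>, where \<open>A\<close> depends only on \<open>K\<close>
  while \<open>B\<close> becomes arbitrarily small as \<open>\<rho>\<close> shrinks (Lipschitz bound plus uniform continuity of \<open>f'\<close>).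
  Summed over a partition, this bounds the quadratic sums of \<open>f(X\<^sup>n) - f(X)\<close> by \<open>A\<close> times those of
  \<open>X\<^sup>n - X\<close> plus \<open>B\<close> times those of \<open>X\<close> on the event \<open>{X\<^sup>*\<^sub>t \<le> K, (X\<^sup>n - X)\<^sup>*\<^sub>t \<le> \<rho>}\<close>, and the
  bound survives the limit in probability: there \<open>[f(X\<^sup>n) - f(X)]\<^sub>t \<le> A [X\<^sup>n - X]\<^sub>t + B [X]\<^sub>t\<close> a.s.
  As \<open>X\<^sup>*\<^sub>t\<close> and \<open>[X]\<^sub>t\<close> are tight while \<open>(X\<^sup>n - X)\<^sup>*\<^sub>t\<close> and \<open>[X\<^sup>n - X]\<^sub>t\<close> tend to 0 in probability,
  choosing \<open>K\<close>, then \<open>B\<close>, then \<open>\<rho>\<close> makes the right-hand side small with high probability.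
  In the strong sense the same argument runs along uniform deterministic partitions, which are
  partitions by stopping times.\<close>

lemma C1_has_continuous_derivative:
  fixes f :: "real \<Rightarrow> real"
  assumes "f C1_differentiable_on UNIV"
  obtains f' where "\<And>x. (f has_real_derivative f' x) (at x)" "continuous_on UNIV f'"
  using assms unfolding C1_differentiable_on_def
  by (auto simp: has_real_derivative_iff_has_vector_derivative)

lemma C1_lipschitz_on_interval:
  fixes f :: "real \<Rightarrow> real"
  assumes "f C1_differentiable_on UNIV"
  obtains L where "L \<ge> 0" "\<And>x y. \<bar>x\<bar> \<le> R \<Longrightarrow> \<bar>y\<bar> \<le> R \<Longrightarrow> \<bar>f y - f x\<bar> \<le> L * \<bar>y - x\<bar>"
proof -
  obtain f' where f': "\<And>x. (f has_real_derivative f' x) (at x)" and cont: "continuous_on UNIV f'"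
    using C1_has_continuous_derivative[OF assms] by blast
  have "compact (f' ` {-R..R})"
    by (intro compact_continuous_image continuous_on_subset[OF cont]) auto
  then obtain L0 where L0: "\<And>u. u \<in> {-R..R} \<Longrightarrow> \<bar>f' u\<bar> \<le> L0"
    unfolding bounded_iff by (metis compact_imp_bounded bounded_iff image_eqI real_norm_def)
  have "\<bar>f y - f x\<bar> \<le> max L0 0 * \<bar>y - x\<bar>" if "\<bar>x\<bar> \<le> R" "\<bar>y\<bar> \<le> R" for x y
    using field_differentiable_bound[of "{-R..R}" f f' "max L0 0" y x] that L0
    by (force intro: has_field_derivative_at_within[OF f'] simp: abs_le_iff)
  then show ?thesis by (intro that[of "max L0 0"]) auto
qed

lemma C1_second_difference_small:
  fixes f :: "real \<Rightarrow> real"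
  assumes "f C1_differentiable_on UNIV" and "\<theta> > 0"
  obtains \<rho> where "\<rho> > 0"
    "\<And>x x' y. \<bar>x\<bar> \<le> R \<Longrightarrow> \<bar>x'\<bar> \<le> R \<Longrightarrow> \<bar>y\<bar> \<le> \<rho> \<Longrightarrow>
       \<bar>(f (x' + y) - f x') - (f (x + y) - f x)\<bar> \<le> \<theta> * \<bar>x' - x\<bar>"
proof -
  obtain f' where f': "\<And>x. (f has_real_derivative f' x) (at x)" and cont: "continuous_on UNIV f'"
    using C1_has_continuous_derivative[OF assms(1)] by blast
  have "uniformly_continuous_on {-(R+1)..R+1} f'"
    by (intro compact_uniformly_continuous continuous_on_subset[OF cont]) auto
  then obtain d where d: "d > 0"
    and close: "\<And>u v. u \<in> {-(R+1)..R+1} \<Longrightarrow> v \<in> {-(R+1)..R+1} \<Longrightarrow> \<bar>v - u\<bar> < d \<Longrightarrow> \<bar>f' v - f' u\<bar> < \<theta>"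
    using assms(2) unfolding uniformly_continuous_on_def dist_real_def by metis
  define \<rho> where "\<rho> = min 1 (d / 2)"
  have "\<bar>(f (x' + y) - f x') - (f (x + y) - f x)\<bar> \<le> \<theta> * \<bar>x' - x\<bar>"
    if "\<bar>x\<bar> \<le> R" "\<bar>x'\<bar> \<le> R" "\<bar>y\<bar> \<le> \<rho>" for x x' y
  proof -
    have "((\<lambda>z. f (z + y) - f z) has_real_derivative f' (z + y) - f' z) (at z within {-R..R})" for z
    proof -
      have "((\<lambda>z. f (z + y)) has_real_derivative f' (z + y)) (at z)"
        using f'[of "z + y"] by (simp add: DERIV_shift)
      then show ?thesis by (rule has_field_derivative_at_within[OF DERIV_diff[OF _ f']])
    qed
    moreover have "\<bar>f' (z + y) - f' z\<bar> \<le> \<theta>" if "z \<in> {-R..R}" for z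
      using close[of z "z + y"] that \<open>\<bar>y\<bar> \<le> \<rho>\<close> d unfolding \<rho>_def by (auto simp: abs_le_iff)
    ultimately show ?thesis
      using field_differentiable_bound[of "{-R..R}" "\<lambda>z. f (z + y) - f z" "\<lambda>z. f' (z + y) - f' z" \<theta> x' x]
        that by (simp add: abs_le_iff)
  qed
  moreover have "\<rho> > 0" using d unfolding \<rho>_def by simp
  ultimately show ?thesis using that by blast
qed

definition increment_square_bound :: "(real \<Rightarrow> real) \<Rightarrow> real \<Rightarrow> real \<Rightarrow> real \<Rightarrow> real \<Rightarrow> bool" where
  "increment_square_bound f K \<rho> A B \<longleftrightarrow>
     (\<forall>xa xb ya yb. \<bar>xa\<bar> \<le> K \<longrightarrow> \<bar>xb\<bar> \<le> K \<longrightarrow> \<bar>ya\<bar> \<le> \<rho> \<longrightarrow> \<bar>yb\<bar> \<le> \<rho> \<longrightarrow>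
        (f (xb + yb) - f xb - (f (xa + ya) - f xa))\<^sup>2 \<le> A * (yb - ya)\<^sup>2 + B * (xb - xa)\<^sup>2)"

lemma C1_increment_square_bound:
  fixes f :: "real \<Rightarrow> real"
  assumes C1: "f C1_differentiable_on UNIV"
  shows "\<exists>A>0. \<forall>B>0. \<exists>\<rho>>0. increment_square_bound f K \<rho> A B"
proof -
  obtain L where L: "L \<ge> 0" "\<And>x y. \<bar>x\<bar> \<le> K + 1 \<Longrightarrow> \<bar>y\<bar> \<le> K + 1 \<Longrightarrow> \<bar>f y - f x\<bar> \<le> L * \<bar>y - x\<bar>"
    using C1_lipschitz_on_interval[OF C1] by blast
  have "\<exists>\<rho>>0. increment_square_bound f K \<rho> (2 * L\<^sup>2 + 1) B" if "B > 0" for B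
  proof -
    define \<theta> where "\<theta> = sqrt (B / 2)"
    have \<theta>: "\<theta> > 0" "2 * \<theta>\<^sup>2 = B" using that unfolding \<theta>_def by simp_all
    obtain \<rho>0 where \<rho>0: "\<rho>0 > 0" and second: "\<And>x x' y. \<bar>x\<bar> \<le> K \<Longrightarrow> \<bar>x'\<bar> \<le> K \<Longrightarrow> \<bar>y\<bar> \<le> \<rho>0 \<Longrightarrow>
       \<bar>(f (x' + y) - f x') - (f (x + y) - f x)\<bar> \<le> \<theta> * \<bar>x' - x\<bar>"
      using C1_second_difference_small[OF C1 \<theta>(1)] by blast
    define \<rho> where "\<rho> = min 1 \<rho>0"
    have "(f (xb + yb) - f xb - (f (xa + ya) - f xa))\<^sup>2 \<le> (2 * L\<^sup>2 + 1) * (yb - ya)\<^sup>2 + B * (xb - xa)\<^sup>2"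
      if "\<bar>xa\<bar> \<le> K" "\<bar>xb\<bar> \<le> K" "\<bar>ya\<bar> \<le> \<rho>" "\<bar>yb\<bar> \<le> \<rho>" for xa xb ya yb
    proof -
      define u where "u = f (xb + yb) - f (xb + ya)"
      define v where "v = (f (xb + ya) - f xb) - (f (xa + ya) - f xa)"
      have "\<bar>u\<bar> \<le> L * \<bar>yb - ya\<bar>"
        unfolding u_def using L(2)[of "xb + ya" "xb + yb"] that unfolding \<rho>_def by (simp add: abs_le_iff)
      then have "u\<^sup>2 \<le> L\<^sup>2 * (yb - ya)\<^sup>2"
        by (metis abs_ge_zero power2_abs power_mono power_mult_distrib)
      have "\<bar>v\<bar> \<le> \<theta> * \<bar>xb - xa\<bar>"
        unfolding v_def using second that unfolding \<rho>_def by simp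
      then have "v\<^sup>2 \<le> \<theta>\<^sup>2 * (xb - xa)\<^sup>2"
        by (metis abs_ge_zero power2_abs power_mono power_mult_distrib)
      have "(f (xb + yb) - f xb - (f (xa + ya) - f xa))\<^sup>2 = (u + v)\<^sup>2"
        unfolding u_def v_def by (simp add: algebra_simps)
      also have "\<dots> \<le> 2 * u\<^sup>2 + 2 * v\<^sup>2"
        using zero_le_power2[of "u - v"] by (simp add: power2_eq_square algebra_simps)
      also have "\<dots> \<le> 2 * L\<^sup>2 * (yb - ya)\<^sup>2 + 2 * \<theta>\<^sup>2 * (xb - xa)\<^sup>2"
        using \<open>u\<^sup>2 \<le> _\<close> \<open>v\<^sup>2 \<le> _\<close> by simp
      also have "\<dots> \<le> (2 * L\<^sup>2 + 1) * (yb - ya)\<^sup>2 + B * (xb - xa)\<^sup>2"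
        unfolding \<theta>(2)[symmetric] by (simp add: algebra_simps)
      finally show ?thesis .
    qed
    moreover have "\<rho> > 0" using \<rho>0 unfolding \<rho>_def by simp
    ultimately show ?thesis unfolding increment_square_bound_def by blast
  qed
  moreover have "2 * L\<^sup>2 + 1 > 0" by (simp add: add_nonneg_pos)
  ultimately show ?thesis by blast
qed

lemma tendsto_imp_eventually_abs_le:
  fixes g :: "'b \<Rightarrow> real"
  shows "(g \<longlongrightarrow> l) F \<Longrightarrow> eventually (\<lambda>u. \<bar>g u\<bar> \<le> \<bar>l\<bar> + 1) F"
  by (drule tendstoD[OF _ zero_less_one]) (auto simp: dist_real_def elim: eventually_mono)

lemma cadlag_path_locally_bounded:
  assumes cadlag: "cadlag_path t g" and s: "s \<in> {0..t}"
  obtains B where "eventually (\<lambda>u. u \<in> {0..t} \<longrightarrow> \<bar>g u\<bar> \<le> B) (nhds s)"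
proof -
  obtain Br where Br: "eventually (\<lambda>u. u \<in> {0..t} \<longrightarrow> \<bar>g u\<bar> \<le> Br) (at_right s)"
  proof (cases "s < t")
    case True
    then have "(g \<longlongrightarrow> g s) (at_right s)" using cadlag s unfolding cadlag_path_def by auto
    then show ?thesis
      by (intro that[of "\<bar>g s\<bar> + 1"]) (auto dest: tendsto_imp_eventually_abs_le elim: eventually_mono)
  next
    case False
    then show ?thesis using s eventually_at_right_less[of s] by (intro that[of 0]) (auto elim: eventually_mono)
  qed
  obtain Bl where Bl: "eventually (\<lambda>u. u \<in> {0..t} \<longrightarrow> \<bar>g u\<bar> \<le> Bl) (at_left s)"
  proof (cases "s > 0")
    case True
    then have "s \<in> {0<..t}" using s by simp
    then obtain l where "(g \<longlongrightarrow> l) (at_left s)" using cadlag unfolding cadlag_path_def by blast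
    then show ?thesis
      by (intro that[of "\<bar>l\<bar> + 1"]) (auto dest: tendsto_imp_eventually_abs_le elim: eventually_mono)
  next
    case False
    then have "eventually (\<lambda>u. u < 0) (at_left s)"
      using s by (intro eventually_at_leftI[of "s - 1"]) auto
    then show ?thesis by (intro that[of 0]) (auto elim: eventually_mono)
  qed
  have "eventually (\<lambda>u. u \<in> {0..t} \<longrightarrow> \<bar>g u\<bar> \<le> max \<bar>g s\<bar> (max Br Bl)) (at s)"
    using Br Bl unfolding eventually_at_split by (auto elim: eventually_mono)
  then have "eventually (\<lambda>u. u \<in> {0..t} \<longrightarrow> \<bar>g u\<bar> \<le> max \<bar>g s\<bar> (max Br Bl)) (nhds s)"
    unfolding eventually_nhds_conv_at by auto
  then show ?thesis by (rule that)
qed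

lemma cadlag_path_bounded:
  assumes cadlag: "cadlag_path t g"
  obtains B where "\<And>u. u \<in> {0..t} \<Longrightarrow> \<bar>g u\<bar> \<le> B"
proof -
  have "\<forall>s\<in>{0..t}. \<exists>B. eventually (\<lambda>u. u \<in> {0..t} \<longrightarrow> \<bar>g u\<bar> \<le> B) (nhds s)"
    using cadlag_path_locally_bounded[OF cadlag] by blast
  then obtain B where "\<forall>s\<in>{0..t}. eventually (\<lambda>u. u \<in> {0..t} \<longrightarrow> \<bar>g u\<bar> \<le> B s) (nhds s)"
    by (auto dest!: bchoice)
  then obtain U where U: "\<forall>s\<in>{0..t}. open (U s) \<and> s \<in> U s \<and> (\<forall>u\<in>U s. u \<in> {0..t} \<longrightarrow> \<bar>g u\<bar> \<le> B s)"
    unfolding eventually_nhds by (auto dest!: bchoice)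
  then have "\<And>s. s \<in> {0..t} \<Longrightarrow> open (U s)" and "{0..t} \<subseteq> (\<Union>s\<in>{0..t}. U s)" by blast+
  then obtain C where C: "C \<subseteq> {0..t}" "finite C" "{0..t} \<subseteq> (\<Union>s\<in>C. U s)"
    by (rule compactE_image[OF compact_Icc])
  have "\<bar>g u\<bar> \<le> (\<Sum>s\<in>C. \<bar>B s\<bar>)" if u: "u \<in> {0..t}" for u
  proof -
    obtain s where "s \<in> C" "u \<in> U s" using C(3) u by blast
    then have "\<bar>g u\<bar> \<le> B s" using U C(1) u by auto
    also have "\<dots> \<le> \<bar>B s\<bar>" by simp
    also have "\<dots> \<le> (\<Sum>s\<in>C. \<bar>B s\<bar>)" using \<open>s \<in> C\<close> C(2) by (intro member_le_sum) auto
    finally show ?thesis .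
  qed
  then show ?thesis by (rule that)
qed

text \<open>The two properties of a cadlag path that the argument needs: boundedness makes \<open>sup_abs\<close>
  a genuine supremum, and right continuity lets it be taken over countably many times.\<close>

definition rc_bounded :: "real \<Rightarrow> (real \<Rightarrow> real) \<Rightarrow> bool" where
  "rc_bounded t g \<longleftrightarrow> (\<exists>B. \<forall>u\<in>{0..t}. \<bar>g u\<bar> \<le> B) \<and> (\<forall>s\<in>{0..<t}. (g \<longlongrightarrow> g s) (at_right s))"

lemma cadlag_path_imp_rc_bounded: "cadlag_path t g \<Longrightarrow> rc_bounded t g"
  unfolding rc_bounded_def by (metis cadlag_path_bounded cadlag_path_def)

lemma rc_bounded_const: "rc_bounded t (\<lambda>s. c)"
  unfolding rc_bounded_def by auto

lemma rc_bounded_add: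
  assumes "rc_bounded t g" "rc_bounded t h" shows "rc_bounded t (\<lambda>s. g s + h s)"
proof -
  obtain B1 B2 where "\<forall>u\<in>{0..t}. \<bar>g u\<bar> \<le> B1" "\<forall>u\<in>{0..t}. \<bar>h u\<bar> \<le> B2"
    using assms unfolding rc_bounded_def by blast
  then have "\<forall>u\<in>{0..t}. \<bar>g u + h u\<bar> \<le> B1 + B2" by (auto intro!: order_trans[OF abs_triangle_ineq] add_mono)
  then show ?thesis using assms unfolding rc_bounded_def by (auto intro: tendsto_add)
qed

lemma rc_bounded_mult:
  assumes "rc_bounded t g" "rc_bounded t h" shows "rc_bounded t (\<lambda>s. g s * h s)"
proof -
  obtain B1 B2 where "\<forall>u\<in>{0..t}. \<bar>g u\<bar> \<le> B1" "\<forall>u\<in>{0..t}. \<bar>h u\<bar> \<le> B2"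
    using assms unfolding rc_bounded_def by blast
  then have "\<forall>u\<in>{0..t}. \<bar>g u * h u\<bar> \<le> B1 * B2" by (auto simp: abs_mult intro!: mult_mono)
  then show ?thesis using assms unfolding rc_bounded_def by (auto intro: tendsto_mult)
qed

lemma rc_bounded_comp:
  assumes f: "continuous_on UNIV f" and g: "rc_bounded t g" shows "rc_bounded t (\<lambda>s. f (g s))"
proof -
  obtain B where B: "\<forall>u\<in>{0..t}. \<bar>g u\<bar> \<le> B" using g unfolding rc_bounded_def by blast
  have "compact (f ` {-B..B})" by (intro compact_continuous_image continuous_on_subset[OF f]) auto
  then obtain C where "\<forall>y\<in>f ` {-B..B}. \<bar>y\<bar> \<le> C" by (metis compact_imp_bounded bounded_iff real_norm_def)
  then have "\<forall>u\<in>{0..t}. \<bar>f (g u)\<bar> \<le> C" using B by (force simp: abs_le_iff)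
  moreover have "\<forall>s\<in>{0..<t}. ((\<lambda>s. f (g s)) \<longlongrightarrow> f (g s)) (at_right s)"
    using g f unfolding rc_bounded_def continuous_on_eq_continuous_at[OF open_UNIV]
    by (auto intro: isCont_tendsto_compose)
  ultimately show ?thesis unfolding rc_bounded_def by blast
qed

lemma rc_bounded_diff: "rc_bounded t g \<Longrightarrow> rc_bounded t h \<Longrightarrow> rc_bounded t (\<lambda>s. g s - h s)"
  using rc_bounded_add[of t g "\<lambda>s. - h s"] rc_bounded_comp[of uminus t h] by (simp add: continuous_on_minus)

lemma rc_bounded_sum:
  "finite I \<Longrightarrow> (\<And>i. i \<in> I \<Longrightarrow> rc_bounded t (g i)) \<Longrightarrow> rc_bounded t (\<lambda>s. \<Sum>i\<in>I. g i s)"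
  by (induction I rule: finite_induct) (auto intro: rc_bounded_add rc_bounded_const)

lemma rc_bounded_stopped:
  assumes g: "rc_bounded t g" and c: "c \<in> {0..t}" shows "rc_bounded t (\<lambda>s. g (min c s))"
proof -
  obtain B where "\<forall>u\<in>{0..t}. \<bar>g u\<bar> \<le> B" using g unfolding rc_bounded_def by blast
  then have "\<forall>u\<in>{0..t}. \<bar>g (min c u)\<bar> \<le> B" using c by (auto simp: min_def)
  moreover have "((\<lambda>s. g (min c s)) \<longlongrightarrow> g (min c s)) (at_right s)" if s: "s \<in> {0..<t}" for s
  proof (cases "s < c")
    case True
    have "eventually (\<lambda>u. g u = g (min c u)) (at_right s)"
      unfolding eventually_at_right_field using True by (intro exI[of _ c]) auto
    with g s True show ?thesis unfolding rc_bounded_def by (auto intro: tendsto_cong[THEN iffD1])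
  next
    case False
    have "eventually (\<lambda>u. g (min c u) = g (min c s)) (at_right s)"
      using eventually_at_right_less[of s] False by (auto elim: eventually_mono simp: min_def)
    then show ?thesis by (rule tendsto_eventually)
  qed
  ultimately show ?thesis unfolding rc_bounded_def by blast
qed

lemma sup_abs_upper:
  assumes "rc_bounded t (\<lambda>s. Y s \<omega>)" "s \<in> {0..t}"
  shows "\<bar>Y s \<omega>\<bar> \<le> sup_abs t Y \<omega>"
proof -
  obtain B where "\<forall>u\<in>{0..t}. \<bar>Y u \<omega>\<bar> \<le> B" using assms(1) unfolding rc_bounded_def by blast
  then have "bdd_above ((\<lambda>s. \<bar>Y s \<omega>\<bar>) ` {0..t})" by (auto intro!: bdd_aboveI)
  then show ?thesis unfolding sup_abs_def using assms(2) by (rule cSUP_upper2) auto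
qed

lemma borel_measurable_sup_abs:
  assumes t: "t \<ge> 0" and rc: "\<And>\<omega>. \<omega> \<in> space M \<Longrightarrow> rc_bounded t (\<lambda>s. Y s \<omega>)"
    and meas: "\<And>s. s \<in> {0..t} \<Longrightarrow> Y s \<in> borel_measurable M"
  shows "sup_abs t Y \<in> borel_measurable M"
  unfolding borel_measurable_iff_greater
proof
  fix r
  define Q where "Q = insert t (\<rat> \<inter> {0..t})"
  have "{\<omega>\<in>space M. r < sup_abs t Y \<omega>} = (\<Union>q\<in>Q. {\<omega>\<in>space M. r < \<bar>Y q \<omega>\<bar>})"
  proof (intro equalityI subsetI)
    fix \<omega> assume \<omega>: "\<omega> \<in> {\<omega>\<in>space M. r < sup_abs t Y \<omega>}"
    obtain B where "\<forall>u\<in>{0..t}. \<bar>Y u \<omega>\<bar> \<le> B" using rc \<omega> unfolding rc_bounded_def by blast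
    then have "bdd_above ((\<lambda>s. \<bar>Y s \<omega>\<bar>) ` {0..t})" by (auto intro!: bdd_aboveI)
    from less_cSUP_iff[OF _ this] have "\<exists>s\<in>{0..t}. r < \<bar>Y s \<omega>\<bar>"
      using \<omega> t unfolding sup_abs_def by auto
    then obtain s where s: "s \<in> {0..t}" "r < \<bar>Y s \<omega>\<bar>" by blast
    show "\<omega> \<in> (\<Union>q\<in>Q. {\<omega>\<in>space M. r < \<bar>Y q \<omega>\<bar>})"
    proof (cases "s = t")
      case True then show ?thesis using s \<omega> unfolding Q_def by auto
    next
      case False
      \<comment> \<open>by right continuity, the supremum is already exceeded at a rational time\<close>
      then have "((\<lambda>u. \<bar>Y u \<omega>\<bar>) \<longlongrightarrow> \<bar>Y s \<omega>\<bar>) (at_right s)"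
        using rc \<omega> s unfolding rc_bounded_def by (auto intro: tendsto_rabs)
      then have "eventually (\<lambda>u. r < \<bar>Y u \<omega>\<bar>) (at_right s)" using s(2) by (rule order_tendstoD)
      then obtain b where b: "b > s" "\<And>u. s < u \<Longrightarrow> u < b \<Longrightarrow> r < \<bar>Y u \<omega>\<bar>"
        unfolding eventually_at_right_field by blast
      obtain q where "q \<in> \<rat>" "s < q" "q < min b t" using s False b(1) Rats_dense_in_real[of s "min b t"] by auto
      then show ?thesis using b(2)[of q] s \<omega> unfolding Q_def by auto
    qed
  next
    fix \<omega> assume "\<omega> \<in> (\<Union>q\<in>Q. {\<omega>\<in>space M. r < \<bar>Y q \<omega>\<bar>})"
    then obtain q where "q \<in> Q" "\<omega> \<in> space M" "r < \<bar>Y q \<omega>\<bar>" by auto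
    moreover have "q \<in> {0..t}" using \<open>q \<in> Q\<close> t unfolding Q_def by auto
    ultimately show "\<omega> \<in> {\<omega>\<in>space M. r < sup_abs t Y \<omega>}"
      using sup_abs_upper[of t Y \<omega> q] rc by fastforce
  qed
  moreover have "(\<Union>q\<in>Q. {\<omega>\<in>space M. r < \<bar>Y q \<omega>\<bar>}) \<in> sets M"
    using meas t unfolding Q_def by (intro sets.countable_UN'') (auto simp: countable_rat)
  ultimately show "{\<omega>\<in>space M. r < sup_abs t Y \<omega>} \<in> sets M" by simp
qed

lemma (in prob_space) prob_tail_small:
  fixes W :: "'a \<Rightarrow> real"
  assumes "W \<in> borel_measurable M" and "e > 0"
  obtains K where "K > 0" "prob {\<omega>\<in>space M. K < W \<omega>} \<le> e"
proof -
  define A where "A k = {\<omega>\<in>space M. real (Suc k) < W \<omega>}" for k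
  have "(\<lambda>k. prob (A k)) \<longlonglongrightarrow> prob (\<Inter>k. A k)"
    using assms(1) by (intro finite_Lim_measure_decseq) (auto simp: A_def decseq_def)
  moreover have "\<omega> \<notin> A (nat \<lceil>W \<omega>\<rceil>)" for \<omega>
    unfolding A_def using real_nat_ceiling_ge[of "W \<omega>"] by auto
  then have "(\<Inter>k. A k) = {}" by blast
  ultimately have "(\<lambda>k. prob (A k)) \<longlonglongrightarrow> 0" by simp
  then have "eventually (\<lambda>k. prob (A k) < e) sequentially" using assms(2) by (rule order_tendstoD)
  then obtain k where "prob (A k) < e" unfolding eventually_sequentially by blast
  then show ?thesis unfolding A_def by (intro that[of "real (Suc k)"]) auto
qed

lemma (in prob_space) conv_prob_limit_gap_null:
  assumes meas: "\<And>k. U k \<in> borel_measurable M" "\<And>k. V k \<in> borel_measurable M" "\<And>k. W k \<in> borel_measurable M"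
      "U' \<in> borel_measurable M" "V' \<in> borel_measurable M" "W' \<in> borel_measurable M"
    and E: "E \<in> sets M"
    and conv: "conv_prob_zero M (\<lambda>k \<omega>. U k \<omega> - U' \<omega>)" "conv_prob_zero M (\<lambda>k \<omega>. V k \<omega> - V' \<omega>)"
      "conv_prob_zero M (\<lambda>k \<omega>. W k \<omega> - W' \<omega>)"
    and le: "\<And>k \<omega>. \<omega> \<in> E \<Longrightarrow> \<bar>U k \<omega>\<bar> \<le> a * V k \<omega> + b * W k \<omega>"
    and "\<epsilon> > 0"
  shows "{\<omega>\<in>E. a * V' \<omega> + b * W' \<omega> + (1 + \<bar>a\<bar> + \<bar>b\<bar>) * \<epsilon> < \<bar>U' \<omega>\<bar>} \<in> null_sets M"
    (is "?G \<in> null_sets M")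
proof -
  define dev where "dev Z Z' = {\<omega>\<in>space M. \<epsilon> < \<bar>Z \<omega> - Z' \<omega>\<bar>}" for Z Z' :: "'a \<Rightarrow> real"
  have dev_sets: "dev Z Z' \<in> sets M" if "Z \<in> borel_measurable M" "Z' \<in> borel_measurable M" for Z Z'
    using that unfolding dev_def by measurable
  have G_dev: "?G \<subseteq> dev (U k) U' \<union> dev (V k) V' \<union> dev (W k) W'" for k
  proof
    fix \<omega> assume \<omega>: "\<omega> \<in> ?G"
    show "\<omega> \<in> dev (U k) U' \<union> dev (V k) V' \<union> dev (W k) W'"
    proof (rule ccontr)
      assume "\<omega> \<notin> dev (U k) U' \<union> dev (V k) V' \<union> dev (W k) W'"
      then have close: "\<bar>U k \<omega> - U' \<omega>\<bar> \<le> \<epsilon>" "\<bar>V k \<omega> - V' \<omega>\<bar> \<le> \<epsilon>" "\<bar>W k \<omega> - W' \<omega>\<bar> \<le> \<epsilon>"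
        using \<omega> sets.sets_into_space[OF E] unfolding dev_def by auto
      have "\<bar>a * (V k \<omega> - V' \<omega>)\<bar> \<le> \<bar>a\<bar> * \<epsilon>" "\<bar>b * (W k \<omega> - W' \<omega>)\<bar> \<le> \<bar>b\<bar> * \<epsilon>"
        using close by (simp_all add: abs_mult mult_left_mono)
      then have "\<bar>U' \<omega>\<bar> \<le> a * V' \<omega> + b * W' \<omega> + (1 + \<bar>a\<bar> + \<bar>b\<bar>) * \<epsilon>"
        using le[of \<omega> k] \<omega> close(1) by (auto simp: algebra_simps abs_le_iff)
      then show False using \<omega> by simp
    qed
  qed
  have "prob ?G \<le> prob (dev (U k) U') + prob (dev (V k) V') + prob (dev (W k) W')" for k
  proof -
    have "prob ?G \<le> prob (dev (U k) U' \<union> dev (V k) V' \<union> dev (W k) W')"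
      using G_dev dev_sets meas by (intro finite_measure_mono) auto
    also have "\<dots> \<le> prob (dev (U k) U') + prob (dev (V k) V') + prob (dev (W k) W')"
      using dev_sets meas by (intro order_trans[OF measure_Un_le] add_mono) auto
    finally show ?thesis .
  qed
  moreover have "(\<lambda>k. prob (dev (U k) U') + prob (dev (V k) V') + prob (dev (W k) W')) \<longlonglongrightarrow> 0 + 0 + 0"
    using conv \<open>\<epsilon> > 0\<close> unfolding conv_prob_zero_def dev_def by (intro tendsto_add) auto
  ultimately have "prob ?G \<le> 0" by (intro LIMSEQ_le_const) auto
  moreover have "?G \<in> sets M"
    using E sets.sets_into_space[OF E] meas by measurable
  ultimately show ?thesis by (auto simp: emeasure_eq_measure measure_le_0_iff)
qed

lemma (in prob_space) AE_abs_le_of_conv_prob: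
  assumes meas: "\<And>k. U k \<in> borel_measurable M" "\<And>k. V k \<in> borel_measurable M" "\<And>k. W k \<in> borel_measurable M"
      "U' \<in> borel_measurable M" "V' \<in> borel_measurable M" "W' \<in> borel_measurable M"
    and E: "E \<in> sets M"
    and conv: "conv_prob_zero M (\<lambda>k \<omega>. U k \<omega> - U' \<omega>)" "conv_prob_zero M (\<lambda>k \<omega>. V k \<omega> - V' \<omega>)"
      "conv_prob_zero M (\<lambda>k \<omega>. W k \<omega> - W' \<omega>)"
    and le: "\<And>k \<omega>. \<omega> \<in> E \<Longrightarrow> \<bar>U k \<omega>\<bar> \<le> a * V k \<omega> + b * W k \<omega>"
  shows "AE \<omega> in M. \<omega> \<in> E \<longrightarrow> \<bar>U' \<omega>\<bar> \<le> a * V' \<omega> + b * W' \<omega>"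
proof (rule AE_I')
  define c where "c = 1 + \<bar>a\<bar> + \<bar>b\<bar>"
  define G where "G \<epsilon> = {\<omega>\<in>E. a * V' \<omega> + b * W' \<omega> + c * \<epsilon> < \<bar>U' \<omega>\<bar>}" for \<epsilon>
  show "(\<Union>m. G (1 / Suc m)) \<in> null_sets M"
    unfolding G_def c_def by (intro null_sets_UN conv_prob_limit_gap_null[OF assms]) auto
  show "{\<omega>\<in>space M. \<not> (\<omega> \<in> E \<longrightarrow> \<bar>U' \<omega>\<bar> \<le> a * V' \<omega> + b * W' \<omega>)} \<subseteq> (\<Union>m. G (1 / Suc m))"
  proof
    fix \<omega> assume "\<omega> \<in> {\<omega>\<in>space M. \<not> (\<omega> \<in> E \<longrightarrow> \<bar>U' \<omega>\<bar> \<le> a * V' \<omega> + b * W' \<omega>)}"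
    then have \<omega>: "\<omega> \<in> E" "\<not> \<bar>U' \<omega>\<bar> \<le> a * V' \<omega> + b * W' \<omega>" by auto
    obtain m where "c / (\<bar>U' \<omega>\<bar> - (a * V' \<omega> + b * W' \<omega>)) < Suc m"
      using reals_Archimedean2 by (metis less_trans of_nat_less_iff lessI)
    then have "c * (1 / Suc m) < \<bar>U' \<omega>\<bar> - (a * V' \<omega> + b * W' \<omega>)"
      using \<omega>(2) by (simp add: field_simps)
    then show "\<omega> \<in> (\<Union>m. G (1 / Suc m))" using \<omega>(1) unfolding G_def by (intro UN_I[of m]) auto
  qed
qed

lemma (in prob_space) prob_gt_le_of_AE_dominated:
  fixes Z D Q Xs Ys :: "'a \<Rightarrow> real"
  assumes meas: "Z \<in> borel_measurable M" "D \<in> borel_measurable M" "Q \<in> borel_measurable M"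
      "Xs \<in> borel_measurable M" "Ys \<in> borel_measurable M"
    and A: "A > 0" and B: "B > 0"
    and dom: "AE \<omega> in M. \<bar>Xs \<omega>\<bar> \<le> K \<longrightarrow> \<bar>Ys \<omega>\<bar> \<le> \<rho> \<longrightarrow> \<bar>Z \<omega>\<bar> \<le> A * D \<omega> + B * Q \<omega>"
  shows "prob {\<omega>\<in>space M. \<epsilon> < \<bar>Z \<omega>\<bar>} \<le> prob {\<omega>\<in>space M. K < \<bar>Xs \<omega>\<bar>} + prob {\<omega>\<in>space M. \<rho> < \<bar>Ys \<omega>\<bar>}
    + prob {\<omega>\<in>space M. \<epsilon> / (2 * A) < \<bar>D \<omega>\<bar>} + prob {\<omega>\<in>space M. \<epsilon> / (2 * B) < \<bar>Q \<omega>\<bar>}"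
proof -
  define bad where "bad = {\<omega>\<in>space M. K < \<bar>Xs \<omega>\<bar>} \<union> {\<omega>\<in>space M. \<rho> < \<bar>Ys \<omega>\<bar>} \<union>
    {\<omega>\<in>space M. \<epsilon> / (2 * A) < \<bar>D \<omega>\<bar>} \<union> {\<omega>\<in>space M. \<epsilon> / (2 * B) < \<bar>Q \<omega>\<bar>}"
  have "AE \<omega> in M. \<omega> \<in> {\<omega>\<in>space M. \<epsilon> < \<bar>Z \<omega>\<bar>} \<longrightarrow> \<omega> \<in> bad"
    using dom
  proof eventually_elim
    case (elim \<omega>)
    show ?case
    proof (rule ccontr)
      assume "\<not> ?case"
      then have \<omega>: "\<epsilon> < \<bar>Z \<omega>\<bar>" "\<bar>Xs \<omega>\<bar> \<le> K" "\<bar>Ys \<omega>\<bar> \<le> \<rho>"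
        "\<bar>D \<omega>\<bar> \<le> \<epsilon> / (2 * A)" "\<bar>Q \<omega>\<bar> \<le> \<epsilon> / (2 * B)"
        unfolding bad_def by auto
      have "A * D \<omega> \<le> A * (\<epsilon> / (2 * A))"
        using \<omega>(4) A by (intro mult_left_mono) (auto simp: abs_le_iff)
      moreover have "B * Q \<omega> \<le> B * (\<epsilon> / (2 * B))"
        using \<omega>(5) B by (intro mult_left_mono) (auto simp: abs_le_iff)
      ultimately show False using elim \<omega>(1-3) A B by auto
    qed
  qed
  then have "prob {\<omega>\<in>space M. \<epsilon> < \<bar>Z \<omega>\<bar>} \<le> prob bad"
    using meas unfolding bad_def by (intro finite_measure_mono_AE) auto
  also have "\<dots> \<le> prob {\<omega>\<in>space M. K < \<bar>Xs \<omega>\<bar>} + prob {\<omega>\<in>space M. \<rho> < \<bar>Ys \<omega>\<bar>}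
    + prob {\<omega>\<in>space M. \<epsilon> / (2 * A) < \<bar>D \<omega>\<bar>} + prob {\<omega>\<in>space M. \<epsilon> / (2 * B) < \<bar>Q \<omega>\<bar>}"
    using meas unfolding bad_def
    by (intro order_trans[OF measure_Un_le] add_mono order_refl; measurable)
  finally show ?thesis .
qed

lemma (in prob_space) conv_prob_zero_if_dominated:
  fixes Zt Dt Ys :: "nat \<Rightarrow> 'a \<Rightarrow> real" and Qt Xs :: "'a \<Rightarrow> real"
  assumes meas: "\<And>n. Zt n \<in> borel_measurable M" "\<And>n. Dt n \<in> borel_measurable M" "Qt \<in> borel_measurable M"
      "Xs \<in> borel_measurable M" "\<And>n. Ys n \<in> borel_measurable M"
    and Ys: "conv_prob_zero M Ys" and Dt: "conv_prob_zero M Dt"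
    and dom: "\<And>K. \<exists>A>0. \<forall>B>0. \<exists>\<rho>>0. \<forall>n. AE \<omega> in M.
       \<bar>Xs \<omega>\<bar> \<le> K \<longrightarrow> \<bar>Ys n \<omega>\<bar> \<le> \<rho> \<longrightarrow> \<bar>Zt n \<omega>\<bar> \<le> A * Dt n \<omega> + B * Qt \<omega>"
  shows "conv_prob_zero M Zt"
  unfolding conv_prob_zero_def
proof (intro allI impI LIMSEQ_I)
  fix \<epsilon> e :: real assume \<epsilon>: "\<epsilon> > 0" and e: "e > 0"
  define \<eta> where "\<eta> = e / 4"
  have \<eta>: "\<eta> > 0" using e unfolding \<eta>_def by simp
  obtain K where K: "prob {\<omega>\<in>space M. K < \<bar>Xs \<omega>\<bar>} \<le> \<eta>"
    using prob_tail_small[OF borel_measurable_abs[OF meas(4)] \<eta>] by blast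
  obtain R where R: "R > 0" "prob {\<omega>\<in>space M. R < \<bar>Qt \<omega>\<bar>} \<le> \<eta>"
    using prob_tail_small[OF borel_measurable_abs[OF meas(3)] \<eta>] by blast
  obtain A where A: "A > 0" and dom_A: "\<forall>B>0. \<exists>\<rho>>0. \<forall>n. AE \<omega> in M.
       \<bar>Xs \<omega>\<bar> \<le> K \<longrightarrow> \<bar>Ys n \<omega>\<bar> \<le> \<rho> \<longrightarrow> \<bar>Zt n \<omega>\<bar> \<le> A * Dt n \<omega> + B * Qt \<omega>"
    using dom by blast
  define B where "B = \<epsilon> / (2 * R)"
  have B: "B > 0" "\<epsilon> / (2 * B) = R" using \<epsilon> R(1) unfolding B_def by simp_all
  obtain \<rho> where "\<rho> > 0" and dom_\<rho>: "\<And>n. AE \<omega> in M.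
       \<bar>Xs \<omega>\<bar> \<le> K \<longrightarrow> \<bar>Ys n \<omega>\<bar> \<le> \<rho> \<longrightarrow> \<bar>Zt n \<omega>\<bar> \<le> A * Dt n \<omega> + B * Qt \<omega>"
    using dom_A B(1) by blast
  have "(\<lambda>n. prob {\<omega>\<in>space M. \<rho> < \<bar>Ys n \<omega>\<bar>}) \<longlonglongrightarrow> 0"
    using Ys \<open>\<rho> > 0\<close> unfolding conv_prob_zero_def by blast
  then have "eventually (\<lambda>n. prob {\<omega>\<in>space M. \<rho> < \<bar>Ys n \<omega>\<bar>} < \<eta>) sequentially"
    using \<eta> by (rule order_tendstoD)
  moreover have "(\<lambda>n. prob {\<omega>\<in>space M. \<epsilon> / (2 * A) < \<bar>Dt n \<omega>\<bar>}) \<longlonglongrightarrow> 0"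
    using Dt \<epsilon> A unfolding conv_prob_zero_def by simp
  then have "eventually (\<lambda>n. prob {\<omega>\<in>space M. \<epsilon> / (2 * A) < \<bar>Dt n \<omega>\<bar>} < \<eta>) sequentially"
    using \<eta> by (rule order_tendstoD)
  ultimately have "eventually (\<lambda>n. prob {\<omega>\<in>space M. \<epsilon> < \<bar>Zt n \<omega>\<bar>} < e) sequentially"
  proof eventually_elim
    case (elim n)
    then show ?case
      using prob_gt_le_of_AE_dominated[OF meas(1,2,3,4,5) A B(1) dom_\<rho>[of n], of \<epsilon>, unfolded B(2)] K R(2)
      unfolding \<eta>_def by linarith
  qed
  then show "\<exists>N. \<forall>n\<ge>N. norm (prob {\<omega>\<in>space M. \<epsilon> < \<bar>Zt n \<omega>\<bar>} - 0) < e"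
    unfolding eventually_sequentially by simp
qed

lemma sum_increment_square_bound:
  assumes bound: "increment_square_bound f K \<rho> A B"
    and pts: "\<And>i. i \<in> I \<Longrightarrow> p i \<in> T \<and> q i \<in> T"
    and small: "\<And>s. s \<in> T \<Longrightarrow> \<bar>x s\<bar> \<le> K \<and> \<bar>y s\<bar> \<le> \<rho>"
  shows "(\<Sum>i\<in>I. (f (x (q i) + y (q i)) - f (x (q i)) - (f (x (p i) + y (p i)) - f (x (p i))))\<^sup>2)
     \<le> A * (\<Sum>i\<in>I. (y (q i) - y (p i))\<^sup>2) + B * (\<Sum>i\<in>I. (x (q i) - x (p i))\<^sup>2)"
proof -
  have "(\<Sum>i\<in>I. (f (x (q i) + y (q i)) - f (x (q i)) - (f (x (p i) + y (p i)) - f (x (p i))))\<^sup>2)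
     \<le> (\<Sum>i\<in>I. A * (y (q i) - y (p i))\<^sup>2 + B * (x (q i) - x (p i))\<^sup>2)"
    using bound pts small unfolding increment_square_bound_def by (intro sum_mono) metis
  also have "\<dots> = A * (\<Sum>i\<in>I. (y (q i) - y (p i))\<^sup>2) + B * (\<Sum>i\<in>I. (x (q i) - x (p i))\<^sup>2)"
    by (simp add: sum.distrib sum_distrib_left)
  finally show ?thesis .
qed

lemma (in prob_space) AE_increment_bound_of_sums:
  fixes X Y :: "real \<Rightarrow> 'a \<Rightarrow> real" and QZ QY QX :: "'a \<Rightarrow> real"
  assumes bound: "increment_square_bound f K \<rho> A B" and f: "continuous_on UNIV f" and t: "t \<ge> 0"
    and pts: "\<And>k i. i \<in> I k \<Longrightarrow> p k i \<in> {0..t} \<and> q k i \<in> {0..t}"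
    and rc: "\<And>\<omega>. \<omega> \<in> space M \<Longrightarrow> rc_bounded t (\<lambda>s. X s \<omega>) \<and> rc_bounded t (\<lambda>s. Y s \<omega>)"
    and meas: "\<And>s. s \<in> {0..t} \<Longrightarrow> X s \<in> borel_measurable M \<and> Y s \<in> borel_measurable M"
      "QZ \<in> borel_measurable M" "QY \<in> borel_measurable M" "QX \<in> borel_measurable M"
    and conv_Z: "conv_prob_zero M (\<lambda>k \<omega>. (\<Sum>i\<in>I k. (f (X (q k i) \<omega> + Y (q k i) \<omega>) - f (X (q k i) \<omega>)
        - (f (X (p k i) \<omega> + Y (p k i) \<omega>) - f (X (p k i) \<omega>)))\<^sup>2) - QZ \<omega>)"
    and conv_Y: "conv_prob_zero M (\<lambda>k \<omega>. (\<Sum>i\<in>I k. (Y (q k i) \<omega> - Y (p k i) \<omega>)\<^sup>2) - QY \<omega>)"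
    and conv_X: "conv_prob_zero M (\<lambda>k \<omega>. (\<Sum>i\<in>I k. (X (q k i) \<omega> - X (p k i) \<omega>)\<^sup>2) - QX \<omega>)"
  shows "AE \<omega> in M. \<bar>sup_abs t X \<omega>\<bar> \<le> K \<longrightarrow> \<bar>sup_abs t Y \<omega>\<bar> \<le> \<rho> \<longrightarrow> \<bar>QZ \<omega>\<bar> \<le> A * QY \<omega> + B * QX \<omega>"
proof -
  define E where "E = {\<omega>\<in>space M. \<bar>sup_abs t X \<omega>\<bar> \<le> K \<and> \<bar>sup_abs t Y \<omega>\<bar> \<le> \<rho>}"
  have "sup_abs t X \<in> borel_measurable M" "sup_abs t Y \<in> borel_measurable M"
    using rc meas t by (auto intro: borel_measurable_sup_abs)
  then have "E \<in> sets M" unfolding E_def by measurable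
  moreover have "(\<Sum>i\<in>I k. (f (X (q k i) \<omega> + Y (q k i) \<omega>) - f (X (q k i) \<omega>)
        - (f (X (p k i) \<omega> + Y (p k i) \<omega>) - f (X (p k i) \<omega>)))\<^sup>2)
      \<le> A * (\<Sum>i\<in>I k. (Y (q k i) \<omega> - Y (p k i) \<omega>)\<^sup>2) + B * (\<Sum>i\<in>I k. (X (q k i) \<omega> - X (p k i) \<omega>)\<^sup>2)"
    if "\<omega> \<in> E" for k \<omega>
  proof (rule sum_increment_square_bound[OF bound])
    show "\<bar>X s \<omega>\<bar> \<le> K \<and> \<bar>Y s \<omega>\<bar> \<le> \<rho>" if "s \<in> {0..t}" for s
      using sup_abs_upper[of t X \<omega> s] sup_abs_upper[of t Y \<omega> s] rc \<open>\<omega> \<in> E\<close> that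
      unfolding E_def by fastforce
  qed (use pts in blast)
  moreover have pt_meas: "X (p k i) \<in> borel_measurable M" "X (q k i) \<in> borel_measurable M"
      "Y (p k i) \<in> borel_measurable M" "Y (q k i) \<in> borel_measurable M" if "i \<in> I k" for k i
    using meas pts[OF that] by blast+
  ultimately have "AE \<omega> in M. \<omega> \<in> E \<longrightarrow> \<bar>QZ \<omega>\<bar> \<le> A * QY \<omega> + B * QX \<omega>"
    using meas(2-4) conv_Z conv_Y conv_X
    by (intro AE_abs_le_of_conv_prob[where a = A and b = B])
       (auto intro!: borel_measurable_sum borel_measurable_diff borel_measurable_add borel_measurable_power
         borel_measurable_continuous_on[OF f] pt_meas simp: sum_nonneg)
  with AE_space show ?thesis unfolding E_def by eventually_elim auto
qed

text \<open>The weak and the strong sense differ only in the partitions along which the quadratic sums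
  converge, so the partitions are an arbitrary family here: the \<open>k\<close>-th one consists of the
  intervals \<open>[p k i, q k i]\<close>, \<open>i \<in> I k\<close>.\<close>

lemma (in prob_space) conv_prob_zero_qv_comp_diff:
  fixes X :: "real \<Rightarrow> 'a \<Rightarrow> real" and Xn :: "nat \<Rightarrow> real \<Rightarrow> 'a \<Rightarrow> real"
    and QF QD :: "nat \<Rightarrow> 'a \<Rightarrow> real" and Q :: "'a \<Rightarrow> real"
  assumes C1: "f C1_differentiable_on UNIV" and t: "t \<ge> 0"
    and rc: "\<And>n \<omega>. \<omega> \<in> space M \<Longrightarrow> rc_bounded t (\<lambda>s. X s \<omega>) \<and> rc_bounded t (\<lambda>s. Xn n s \<omega>)"
    and meas: "\<And>n s. s \<in> {0..t} \<Longrightarrow> X s \<in> borel_measurable M \<and> Xn n s \<in> borel_measurable M"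
      "\<And>n. QF n \<in> borel_measurable M" "\<And>n. QD n \<in> borel_measurable M" "Q \<in> borel_measurable M"
    and pts: "\<And>k i. i \<in> I k \<Longrightarrow> p k i \<in> {0..t} \<and> q k i \<in> {0..t}"
    and sums_F: "\<And>n. conv_prob_zero M (\<lambda>k \<omega>. (\<Sum>i\<in>I k. (f (Xn n (q k i) \<omega>) - f (X (q k i) \<omega>)
        - (f (Xn n (p k i) \<omega>) - f (X (p k i) \<omega>)))\<^sup>2) - QF n \<omega>)"
    and sums_D: "\<And>n. conv_prob_zero M (\<lambda>k \<omega>. (\<Sum>i\<in>I k. ((Xn n (q k i) \<omega> - X (q k i) \<omega>)
        - (Xn n (p k i) \<omega> - X (p k i) \<omega>))\<^sup>2) - QD n \<omega>)"
    and sums_X: "conv_prob_zero M (\<lambda>k \<omega>. (\<Sum>i\<in>I k. (X (q k i) \<omega> - X (p k i) \<omega>)\<^sup>2) - Q \<omega>)"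
    and sup_conv: "conv_prob_zero M (\<lambda>n. sup_abs t (\<lambda>s \<omega>. Xn n s \<omega> - X s \<omega>))"
    and QD_conv: "conv_prob_zero M QD"
  shows "conv_prob_zero M QF"
proof -
  define Y where "Y n s \<omega> = Xn n s \<omega> - X s \<omega>" for n s \<omega>
  have rc_Y: "rc_bounded t (\<lambda>s. Y n s \<omega>)" if "\<omega> \<in> space M" for n \<omega>
    unfolding Y_def using rc[OF that] by (intro rc_bounded_diff) auto
  have meas_Y: "Y n s \<in> borel_measurable M" if "s \<in> {0..t}" for n s
    unfolding Y_def using meas(1)[OF that] by (intro borel_measurable_diff) auto
  have dom_n: "AE \<omega> in M. \<bar>sup_abs t X \<omega>\<bar> \<le> K \<longrightarrow> \<bar>sup_abs t (Y n) \<omega>\<bar> \<le> \<rho> \<longrightarrow> \<bar>QF n \<omega>\<bar> \<le> A * QD n \<omega> + B * Q \<omega>"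
    if "increment_square_bound f K \<rho> A B" for n K \<rho> A B
    using sums_F[of n] sums_D[of n] sums_X rc rc_Y meas meas_Y
    by (intro AE_increment_bound_of_sums[OF that C1_differentiable_imp_continuous_on[OF C1] t pts])
       (auto simp: Y_def)
  have dom: "\<exists>A>0. \<forall>B>0. \<exists>\<rho>>0. \<forall>n. AE \<omega> in M. \<bar>sup_abs t X \<omega>\<bar> \<le> K \<longrightarrow>
      \<bar>sup_abs t (Y n) \<omega>\<bar> \<le> \<rho> \<longrightarrow> \<bar>QF n \<omega>\<bar> \<le> A * QD n \<omega> + B * Q \<omega>" for K
  proof -
    obtain A where A: "A > 0" "\<forall>B>0. \<exists>\<rho>>0. increment_square_bound f K \<rho> A B"
      using C1_increment_square_bound[OF C1, of K] by blast
    have "\<exists>\<rho>>0. \<forall>n. AE \<omega> in M. \<bar>sup_abs t X \<omega>\<bar> \<le> K \<longrightarrow>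
      \<bar>sup_abs t (Y n) \<omega>\<bar> \<le> \<rho> \<longrightarrow> \<bar>QF n \<omega>\<bar> \<le> A * QD n \<omega> + B * Q \<omega>" if "B > 0" for B
      using A(2) that dom_n by blast
    then show ?thesis using A(1) by blast
  qed
  have "sup_abs t X \<in> borel_measurable M"
    using rc meas t by (intro borel_measurable_sup_abs) auto
  moreover have "sup_abs t (Y n) \<in> borel_measurable M" for n
    using rc_Y meas_Y t by (intro borel_measurable_sup_abs) auto
  moreover have "conv_prob_zero M (\<lambda>n. sup_abs t (Y n))"
    using sup_conv unfolding Y_def[abs_def] .
  ultimately show ?thesis
    by (rule conv_prob_zero_if_dominated[OF meas(2-4) _ _ _ QD_conv dom])
qed

lemma adapted_borel_measurable:
  assumes "usual_hypotheses M F" "adapted F t Y" "s \<in> {0..t}"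
  shows "Y s \<in> borel_measurable M"
proof -
  have "filtration (space M) F" "sets (F s) \<subseteq> sets M"
    using assms(1) unfolding usual_hypotheses_def by blast+
  moreover have "Y s \<in> borel_measurable (F s)" using assms(2,3) unfolding adapted_def by blast
  ultimately show ?thesis using filtration.space_F unfolding measurable_def by fastforce
qed

lemma succ_pt_mem:
  assumes "is_partition t D" "x \<in> D" "x < t"
  shows "succ_pt D x \<in> D"
proof -
  have "finite {y\<in>D. x < y}" "{y\<in>D. x < y} \<noteq> {}" using assms unfolding is_partition_def by auto
  then show ?thesis unfolding succ_pt_def using Min_in by blast
qed

lemma (in prob_space) conv_prob_zero_weak_qv_comp_diff:
  fixes X :: "real \<Rightarrow> 'a \<Rightarrow> real" and Xn :: "nat \<Rightarrow> real \<Rightarrow> 'a \<Rightarrow> real"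
  assumes C1: "f C1_differentiable_on UNIV" and t: "t > 0"
    and rc: "\<And>n \<omega>. \<omega> \<in> space M \<Longrightarrow> rc_bounded t (\<lambda>s. X s \<omega>) \<and> rc_bounded t (\<lambda>s. Xn n s \<omega>)"
    and meas: "\<And>n s. s \<in> {0..t} \<Longrightarrow> X s \<in> borel_measurable M \<and> Xn n s \<in> borel_measurable M"
    and D: "refining_sequence t D" and qv_X: "weak_qv M t D X Q"
    and qv_D: "\<And>n. weak_qv M t D (\<lambda>s \<omega>. Xn n s \<omega> - X s \<omega>) (QD n)"
    and qv_F: "\<And>n. weak_qv M t D (\<lambda>s \<omega>. f (Xn n s \<omega>) - f (X s \<omega>)) (QF n)"
    and sup_conv: "conv_prob_zero M (\<lambda>n. sup_abs t (\<lambda>s \<omega>. Xn n s \<omega> - X s \<omega>))"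
    and QD_conv: "conv_prob_zero M (\<lambda>n. QD n t)"
  shows "conv_prob_zero M (\<lambda>n. QF n t)"
proof (rule conv_prob_zero_qv_comp_diff[where I = "\<lambda>k. {x\<in>D k. x \<le> t \<and> x < t}"
      and p = "\<lambda>k x. x" and q = "\<lambda>k. succ_pt (D k)", OF C1 _ rc meas])
  have qv: "\<And>t' Y Q'. t' \<in> {0<..t} \<Longrightarrow> weak_qv M t D Y Q' \<Longrightarrow> Q' t' \<in> borel_measurable M \<and>
      conv_prob_zero M (\<lambda>k \<omega>. discrete_qv t (D k) Y t' \<omega> - Q' t' \<omega>)"
    unfolding weak_qv_def by auto
  show "QF n t \<in> borel_measurable M" "QD n t \<in> borel_measurable M"
    and "conv_prob_zero M (\<lambda>k \<omega>. (\<Sum>x\<in>{x\<in>D k. x \<le> t \<and> x < t}. (f (Xn n (succ_pt (D k) x) \<omega>)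
        - f (X (succ_pt (D k) x) \<omega>) - (f (Xn n x \<omega>) - f (X x \<omega>)))\<^sup>2) - QF n t \<omega>)"
    and "conv_prob_zero M (\<lambda>k \<omega>. (\<Sum>x\<in>{x\<in>D k. x \<le> t \<and> x < t}. (Xn n (succ_pt (D k) x) \<omega>
        - X (succ_pt (D k) x) \<omega> - (Xn n x \<omega> - X x \<omega>))\<^sup>2) - QD n t \<omega>)" for n
    using qv[OF _ qv_D[of n]] qv[OF _ qv_F[of n]] t unfolding discrete_qv_def by auto
  show "Q t \<in> borel_measurable M"
    and "conv_prob_zero M (\<lambda>k \<omega>. (\<Sum>x\<in>{x\<in>D k. x \<le> t \<and> x < t}. (X (succ_pt (D k) x) \<omega> - X x \<omega>)\<^sup>2) - Q t \<omega>)"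
    using qv[OF _ qv_X] t unfolding discrete_qv_def by auto
  show "x \<in> {0..t} \<and> succ_pt (D k) x \<in> {0..t}" if "x \<in> {x\<in>D k. x \<le> t \<and> x < t}" for k x
  proof -
    have "is_partition t (D k)" using D unfolding refining_sequence_def by blast
    then have "D k \<subseteq> {0..t}" "succ_pt (D k) x \<in> D k"
      using succ_pt_mem that unfolding is_partition_def by auto
    then show ?thesis using that by auto
  qed
qed (use t sup_conv QD_conv in auto)

lemma strong_qv_borel_measurable:
  assumes "usual_hypotheses M F" "strong_qv M F t V Q" "s \<in> {0..t}"
  shows "Q s \<in> borel_measurable M"
  using assms adapted_borel_measurable unfolding strong_qv_def strong_cov_def fv_process_def by blast

lemma strong_qv_rc_bounded:
  "strong_qv M F t V Q \<Longrightarrow> \<omega> \<in> space M \<Longrightarrow> rc_bounded t (\<lambda>s. Q s \<omega>)"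
  unfolding strong_qv_def strong_cov_def fv_process_def cadlag_process_def
  by (auto intro: cadlag_path_imp_rc_bounded)

lemma stopping_partition_uniform:
  "t \<ge> 0 \<Longrightarrow> stopping_partition M F t (Suc N) (\<lambda>i \<omega>. t * real i / real (Suc N))"
  unfolding stopping_partition_def
  by (auto simp: stopping_time_const intro!: divide_right_mono mult_left_mono)

lemma mesh_le_uniform:
  "t / real (Suc N) \<le> \<delta> \<Longrightarrow> mesh_le M (Suc N) (\<lambda>i \<omega>. t * real i / real (Suc N)) \<delta>"
  unfolding mesh_le_def by (simp add: diff_divide_distrib[symmetric] algebra_simps)

lemma rc_bounded_cov_P:
  assumes "rc_bounded t (\<lambda>s. V s \<omega>)" "\<And>i. i \<le> n \<Longrightarrow> c i \<in> {0..t}"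
  shows "rc_bounded t (\<lambda>s. cov_P V V n (\<lambda>i \<omega>. c i) s \<omega>)"
  unfolding cov_P_def using assms
  by (intro rc_bounded_sum rc_bounded_mult rc_bounded_diff rc_bounded_stopped) auto

lemma borel_measurable_cov_P:
  assumes "\<And>s. s \<in> {0..t} \<Longrightarrow> V s \<in> borel_measurable M" "\<And>i. 0 \<le> c i" "s \<in> {0..t}"
  shows "(\<lambda>\<omega>. cov_P V V n (\<lambda>i \<omega>. c i) s \<omega>) \<in> borel_measurable M"
  unfolding cov_P_def using assms
  by (intro borel_measurable_sum borel_measurable_times borel_measurable_diff) (auto simp: min_def)

lemma cov_P_uniform_square:
  "cov_P V V (Suc N) (\<lambda>i \<omega>. t * real i / real (Suc N)) t \<omega> = (\<Sum>i\<in>{1..Suc N}.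
     (V (min (t * real i / real (Suc N)) t) \<omega> - V (min (t * real (i - 1) / real (Suc N)) t) \<omega>)\<^sup>2)"
  unfolding cov_P_def by (simp add: power2_eq_square)

lemma (in prob_space) strong_qv_uniform_sums:
  assumes U: "usual_hypotheses M F" and t: "t > 0"
    and rc: "\<And>\<omega>. \<omega> \<in> space M \<Longrightarrow> rc_bounded t (\<lambda>s. V s \<omega>)"
    and meas: "\<And>s. s \<in> {0..t} \<Longrightarrow> V s \<in> borel_measurable M"
    and qv: "strong_qv M F t V Q"
  shows "conv_prob_zero M (\<lambda>N \<omega>. (\<Sum>i\<in>{1..Suc N}. (V (min (t * real i / real (Suc N)) t) \<omega>
      - V (min (t * real (i - 1) / real (Suc N)) t) \<omega>)\<^sup>2) - Q t \<omega>)"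
  unfolding conv_prob_zero_def cov_P_uniform_square[symmetric]
proof (intro allI impI LIMSEQ_I)
  fix e h :: real assume "e > 0" "h > 0"
  then obtain \<delta> where "\<delta> > 0" and approx: "\<And>n \<tau>. stopping_partition M F t n \<tau> \<Longrightarrow> mesh_le M n \<tau> \<delta> \<Longrightarrow>
      prob {\<omega>\<in>space M. e < sup_abs t (\<lambda>s \<omega>. cov_P V V n \<tau> s \<omega> - Q s \<omega>) \<omega>} \<le> h / 2"
    using qv unfolding strong_qv_def strong_cov_def by (meson half_gt_zero)
  have "(\<lambda>N. t / real (Suc N)) \<longlonglongrightarrow> 0" by (intro LIMSEQ_Suc lim_const_over_n)
  then have "eventually (\<lambda>N. t / real (Suc N) < \<delta>) sequentially" using \<open>\<delta> > 0\<close> by (rule order_tendstoD)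
  then obtain N0 where N0: "\<And>N. N \<ge> N0 \<Longrightarrow> t / real (Suc N) < \<delta>" unfolding eventually_sequentially by blast
  show "\<exists>N0. \<forall>N\<ge>N0. norm (prob {\<omega>\<in>space M. e < \<bar>cov_P V V (Suc N) (\<lambda>i \<omega>. t * real i / real (Suc N)) t \<omega>
      - Q t \<omega>\<bar>} - 0) < h"
  proof (intro exI allI impI)
    fix N assume "N \<ge> N0"
    define W where "W s \<omega> = cov_P V V (Suc N) (\<lambda>i \<omega>. t * real i / real (Suc N)) s \<omega> - Q s \<omega>" for s \<omega>
    have grid: "t * real i / real (Suc N) \<in> {0..t}" if "i \<le> Suc N" for i
    proof -
      have "t * real i / real (Suc N) \<le> t * real (Suc N) / real (Suc N)"
        using t that by (intro divide_right_mono mult_left_mono) auto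
      then show ?thesis using t by simp
    qed
    have rc_W: "rc_bounded t (\<lambda>s. W s \<omega>)" if "\<omega> \<in> space M" for \<omega>
      unfolding W_def using rc[OF that] strong_qv_rc_bounded[OF qv that] grid
      by (intro rc_bounded_diff rc_bounded_cov_P) auto
    have "sup_abs t W \<in> borel_measurable M"
      using t rc_W meas strong_qv_borel_measurable[OF U qv] unfolding W_def
      by (intro borel_measurable_sup_abs borel_measurable_diff borel_measurable_cov_P) auto
    moreover have "\<bar>W t \<omega>\<bar> \<le> sup_abs t W \<omega>" if "\<omega> \<in> space M" for \<omega>
      using sup_abs_upper[of t W \<omega> t] rc_W[OF that] t by auto
    ultimately have "prob {\<omega>\<in>space M. e < \<bar>W t \<omega>\<bar>} \<le> prob {\<omega>\<in>space M. e < sup_abs t W \<omega>}"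
      by (intro finite_measure_mono) (auto intro: less_le_trans)
    also have "\<dots> \<le> h / 2"
      unfolding W_def using t N0[OF \<open>N \<ge> N0\<close>]
      by (intro approx stopping_partition_uniform mesh_le_uniform) auto
    finally show "norm (prob {\<omega>\<in>space M. e < \<bar>cov_P V V (Suc N) (\<lambda>i \<omega>. t * real i / real (Suc N)) t \<omega>
      - Q t \<omega>\<bar>} - 0) < h"
      using \<open>h > 0\<close> unfolding W_def by simp
  qed
qed

lemma (in prob_space) conv_prob_zero_strong_qv_comp_diff:
  fixes X :: "real \<Rightarrow> 'a \<Rightarrow> real" and Xn :: "nat \<Rightarrow> real \<Rightarrow> 'a \<Rightarrow> real"
  assumes C1: "f C1_differentiable_on UNIV" and U: "usual_hypotheses M F" and t: "t > 0"
    and rc: "\<And>n \<omega>. \<omega> \<in> space M \<Longrightarrow> rc_bounded t (\<lambda>s. X s \<omega>) \<and> rc_bounded t (\<lambda>s. Xn n s \<omega>)"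
    and meas: "\<And>n s. s \<in> {0..t} \<Longrightarrow> X s \<in> borel_measurable M \<and> Xn n s \<in> borel_measurable M"
    and qv_X: "strong_qv M F t X Q"
    and qv_D: "\<And>n. strong_qv M F t (\<lambda>s \<omega>. Xn n s \<omega> - X s \<omega>) (QD n)"
    and qv_F: "\<And>n. strong_qv M F t (\<lambda>s \<omega>. f (Xn n s \<omega>) - f (X s \<omega>)) (QF n)"
    and sup_conv: "conv_prob_zero M (\<lambda>n. sup_abs t (\<lambda>s \<omega>. Xn n s \<omega> - X s \<omega>))"
    and QD_conv: "conv_prob_zero M (\<lambda>n. QD n t)"
  shows "conv_prob_zero M (\<lambda>n. QF n t)"
proof (rule conv_prob_zero_qv_comp_diff[where I = "\<lambda>N. {1..Suc N}"
      and p = "\<lambda>N i. min (t * real (i - 1) / real (Suc N)) t"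
      and q = "\<lambda>N i. min (t * real i / real (Suc N)) t", OF C1 _ rc meas])
  have f: "continuous_on UNIV f" using C1 by (rule C1_differentiable_imp_continuous_on)
  show "conv_prob_zero M (\<lambda>N \<omega>. (\<Sum>i\<in>{1..Suc N}. (f (Xn n (min (t * real i / real (Suc N)) t) \<omega>)
      - f (X (min (t * real i / real (Suc N)) t) \<omega>) - (f (Xn n (min (t * real (i - 1) / real (Suc N)) t) \<omega>)
      - f (X (min (t * real (i - 1) / real (Suc N)) t) \<omega>)))\<^sup>2) - QF n t \<omega>)" for n
  proof (rule strong_qv_uniform_sums[OF U t _ _ qv_F[of n]])
    show "rc_bounded t (\<lambda>s. f (Xn n s \<omega>) - f (X s \<omega>))" if "\<omega> \<in> space M" for \<omega>
      using rc[OF that] by (intro rc_bounded_diff rc_bounded_comp[OF f]) auto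
    show "(\<lambda>\<omega>. f (Xn n s \<omega>) - f (X s \<omega>)) \<in> borel_measurable M" if "s \<in> {0..t}" for s
      using meas[OF that] by (intro borel_measurable_diff borel_measurable_continuous_on[OF f]) auto
  qed
  show "conv_prob_zero M (\<lambda>N \<omega>. (\<Sum>i\<in>{1..Suc N}. (Xn n (min (t * real i / real (Suc N)) t) \<omega>
      - X (min (t * real i / real (Suc N)) t) \<omega> - (Xn n (min (t * real (i - 1) / real (Suc N)) t) \<omega>
      - X (min (t * real (i - 1) / real (Suc N)) t) \<omega>))\<^sup>2) - QD n t \<omega>)" for n
  proof (rule strong_qv_uniform_sums[OF U t _ _ qv_D[of n]])
    show "rc_bounded t (\<lambda>s. Xn n s \<omega> - X s \<omega>)" if "\<omega> \<in> space M" for \<omega>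
      using rc[OF that] by (intro rc_bounded_diff) auto
    show "(\<lambda>\<omega>. Xn n s \<omega> - X s \<omega>) \<in> borel_measurable M" if "s \<in> {0..t}" for s
      using meas[OF that] by (intro borel_measurable_diff) auto
  qed
  show "conv_prob_zero M (\<lambda>N \<omega>. (\<Sum>i\<in>{1..Suc N}. (X (min (t * real i / real (Suc N)) t) \<omega>
      - X (min (t * real (i - 1) / real (Suc N)) t) \<omega>)\<^sup>2) - Q t \<omega>)"
    using rc meas by (intro strong_qv_uniform_sums[OF U t _ _ qv_X]) blast+
  show "QF n t \<in> borel_measurable M" "QD n t \<in> borel_measurable M" "Q t \<in> borel_measurable M" for n
    using strong_qv_borel_measurable[OF U] qv_F qv_D qv_X t by auto
qed (use t sup_conv QD_conv in \<open>auto simp: min_def\<close>)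

theorem mainTheorem2:
  fixes M :: "'a measure" and F :: "real \<Rightarrow> 'a measure" and t :: real
    and f :: "real \<Rightarrow> real"
    and X :: "real \<Rightarrow> 'a \<Rightarrow> real" and Xn :: "nat \<Rightarrow> real \<Rightarrow> 'a \<Rightarrow> real"
  assumes "prob_space M"
    and "usual_hypotheses M F"
    and "t > 0"
    and "f C1_differentiable_on UNIV"
    and "cadlag_process M t X" and "adapted F t X"
    and "\<And>n. cadlag_process M t (Xn n)" and "\<And>n. adapted F t (Xn n)"
    and "conv_prob_zero M (\<lambda>n. sup_abs t (\<lambda>s \<omega>. Xn n s \<omega> - X s \<omega>))"
  shows
    "(\<forall>D QD QF.
        refining_sequence t D \<and>
        (\<exists>Q. weak_qv M t D X Q) \<and> (\<forall>n. \<exists>Q. weak_qv M t D (Xn n) Q) \<and>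
        (\<forall>n. weak_qv M t D (\<lambda>s \<omega>. Xn n s \<omega> - X s \<omega>) (QD n)) \<and>
        (\<forall>n. weak_qv M t D (\<lambda>s \<omega>. f (Xn n s \<omega>) - f (X s \<omega>)) (QF n)) \<and>
        conv_prob_zero M (\<lambda>n. QD n t)
      \<longrightarrow> conv_prob_zero M (\<lambda>n. QF n t))
   \<and>
    (\<forall>QD QF.
        (\<exists>Q. strong_qv M F t X Q) \<and> (\<forall>n. \<exists>Q. strong_qv M F t (Xn n) Q) \<and>
        (\<forall>n. strong_qv M F t (\<lambda>s \<omega>. Xn n s \<omega> - X s \<omega>) (QD n)) \<and>
        (\<forall>n. strong_qv M F t (\<lambda>s \<omega>. f (Xn n s \<omega>) - f (X s \<omega>)) (QF n)) \<and>
        conv_prob_zero M (\<lambda>n. QD n t)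
      \<longrightarrow> conv_prob_zero M (\<lambda>n. QF n t))"
proof -
  interpret prob_space M by fact
  have rc: "rc_bounded t (\<lambda>s. X s \<omega>) \<and> rc_bounded t (\<lambda>s. Xn n s \<omega>)" if "\<omega> \<in> space M" for n \<omega>
    using assms(5,7) that unfolding cadlag_process_def by (auto intro: cadlag_path_imp_rc_bounded)
  have meas: "X s \<in> borel_measurable M \<and> Xn n s \<in> borel_measurable M" if "s \<in> {0..t}" for n s
    using adapted_borel_measurable[OF assms(2)] assms(6,8) that by blast
  show ?thesis
  proof (intro conjI allI impI; elim conjE exE)
    fix D QD QF Q assume D: "refining_sequence t D" and qv_X: "weak_qv M t D X Q"
      and qv_D: "\<forall>n. weak_qv M t D (\<lambda>s \<omega>. Xn n s \<omega> - X s \<omega>) (QD n)"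
      and qv_F: "\<forall>n. weak_qv M t D (\<lambda>s \<omega>. f (Xn n s \<omega>) - f (X s \<omega>)) (QF n)"
      and QD_conv: "conv_prob_zero M (\<lambda>n. QD n t)"
    show "conv_prob_zero M (\<lambda>n. QF n t)"
      by (rule conv_prob_zero_weak_qv_comp_diff[OF assms(4,3) rc meas D qv_X
            qv_D[rule_format] qv_F[rule_format] assms(9) QD_conv])
  next
    fix QD QF Q assume qv_X: "strong_qv M F t X Q"
      and qv_D: "\<forall>n. strong_qv M F t (\<lambda>s \<omega>. Xn n s \<omega> - X s \<omega>) (QD n)"
      and qv_F: "\<forall>n. strong_qv M F t (\<lambda>s \<omega>. f (Xn n s \<omega>) - f (X s \<omega>)) (QF n)"
      and QD_conv: "conv_prob_zero M (\<lambda>n. QD n t)"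
    show "conv_prob_zero M (\<lambda>n. QF n t)"
      by (rule conv_prob_zero_strong_qv_comp_diff[OF assms(4,2,3) rc meas qv_X
            qv_D[rule_format] qv_F[rule_format] assms(9) QD_conv])
  qed
qed

end
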